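(* Let $d\ge 3$, let $\mathcal M$ be a model of $\mathrm{PQM}_d$, and let $\varphi(x)$ be an $\mathcal L_d$-formula in the single free variable $x$ which is a finite conjunction of literals, each of the form $[t(x):p]$ or $\neg[t(x):p]$ with $p\in\mathbb H_d$ and $t(x)$ a term obtained from $x$ by applying finitely many function symbols $u_U$, $\pi_q$. If $\mathcal V_d\models\exists x\,\varphi(x)$, then $\mathcal M\models\exists x\,\varphi(x)$.
   Context: Notation. For $d\ge 1$, $\mathbb H_d$ is the set of complex linear subspaces of $\mathbb C^d$, ordered by inclusion $\le$, with $\top=\mathbb C^d$, $\bot=\{0\}$, $p^\bot$ the orthogonal complement, $p\wedge q=p\cap q$ and $p\vee q=p+q$. $\mathbb V_d\subseteq\mathbb H_d$ is the set of one-dimensional subspaces (rays). $\mathbb U_d$ is the set of unitary operators on $\mathbb C^d$, and for $U\in\mathbb U_d$, $p\in\mathbb H_d$, $U(p)=\{Uv: v\in p\}$. The Sasaki projection is $p\,\&\,q := q\cap(q^\bot+p)$. Subspaces $p,q$ are compatible iff $p=(p\wedge q)\vee(p\wedge q^\bot)$. Language $\mathcal L_d$: a first-order language without equality and without constants, having a unary function symbol $u_U$ for each $U\in\mathbb U_d$, a unary function symbol $\pi_q$ for each $q\in\mathbb H_d$, and a unary relation symbol $[\,\cdot:p]$ for each $p\in\mathbb H_d$. Theory $\mathrm{PQM}_d$ (over $\mathcal L_d$) has the following axioms, for all $p,q\in\mathbb H_d$ and $U\in\mathbb U_d$: ($\neg\bot$) $\exists x\,\neg[x:\bot]$; ($\top$)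 $\forall x\,[x:\top]$; ($\le$) if $p\le q$: $\forall x\,([x:p]\to[x:q])$; ($\wedge$) if $p,q$ are compatible: $\forall x\,([x:p]\wedge[x:q]\to[x:p\wedge q])$; ($\pi_i$) $\forall x\,([x:p]\to[\pi_q(x):p\,\&\,q])$; ($\pi_c$) if $p\le q$: $\forall x\,([\pi_p(\pi_q(x)):\bot]\to[\pi_p(x):\bot])$; ($\pi_\bot$) $\forall x\,([\pi_q(x):\bot]\to[x:q^\bot])$; ($u_i$) $\forall x\,([x:p]\to[u_U(x):U(p)])$; ($u_e$) $\forall x\,([u_U(x):p]\to[x:U^{-1}(p)])$. Vector model $\mathcal V_d$: the $\mathcal L_d$-structure with domain $\mathbb V_d\cup\{\bot\}$, $u_U^{\mathcal V_d}(x)=U(x)$, $\pi_q^{\mathcal V_d}(x)=x\,\&\,q$, and $[x:p]^{\mathcal V_d}$ holds iff $x\le p$. *)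

theory Defs
  imports "HOL-Analysis.Analysis"
begin

section \<open>Complex Hilbert space C^d, with d = CARD('n)\<close>

type_synonym 'n cvec = "complex ^ 'n"
type_synonym 'n cmat = "complex ^ 'n ^ 'n"

definition hinner :: "'n::finite cvec \<Rightarrow> 'n cvec \<Rightarrow> complex" where
  "hinner v w = (\<Sum>i\<in>UNIV. v $ i * cnj (w $ i))"

definition csubspace :: "'n::finite cvec set \<Rightarrow> bool" where
  "csubspace S \<longleftrightarrow> 0 \<in> S \<and> (\<forall>v\<in>S. \<forall>w\<in>S. v + w \<in> S) \<and> (\<forall>c. \<forall>v\<in>S. c *s v \<in> S)"

definition HH :: "'n::finite cvec set set" where
  "HH = {S. csubspace S}"

definition ortho :: "'n::finite cvec set \<Rightarrow> 'n cvec set" where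
  "ortho p = {v. \<forall>w\<in>p. hinner v w = 0}"

definition ssum :: "'n::finite cvec set \<Rightarrow> 'n cvec set \<Rightarrow> 'n cvec set" where
  "ssum p q = {a + b | a b. a \<in> p \<and> b \<in> q}"

definition botS :: "'n::finite cvec set" where "botS = {0}"
definition topS :: "'n::finite cvec set" where "topS = UNIV"

definition sasaki :: "'n::finite cvec set \<Rightarrow> 'n cvec set \<Rightarrow> 'n cvec set" where
  "sasaki p q = q \<inter> ssum (ortho q) p"

definition compatible :: "'n::finite cvec set \<Rightarrow> 'n cvec set \<Rightarrow> bool" where
  "compatible p q \<longleftrightarrow> p = ssum (p \<inter> q) (p \<inter> ortho q)"

definition adj :: "'n::finite cmat \<Rightarrow> 'n cmat" where
  "adj U = (\<chi> i j. cnj (U $ j $ i))"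

definition unitary :: "'n::finite cmat \<Rightarrow> bool" where
  "unitary U \<longleftrightarrow> U ** adj U = mat 1 \<and> adj U ** U = mat 1"

definition uimg :: "'n::finite cmat \<Rightarrow> 'n cvec set \<Rightarrow> 'n cvec set" where
  "uimg U p = (\<lambda>v. U *v v) ` p"

definition uinvimg :: "'n::finite cmat \<Rightarrow> 'n cvec set \<Rightarrow> 'n cvec set" where
  "uinvimg U p = {w. U *v w \<in> p}"

datatype ('n::finite) trm = Var | U_app "'n cmat" "'n trm" | Pi_app "'n cvec set" "'n trm"

text \<open>A term is an L_d-term iff all its unitary / projection indices are legal symbols.\<close>
fun wf_trm :: "'n::finite trm \<Rightarrow> bool" where
  "wf_trm Var = True"
| "wf_trm (U_app U t) = (unitary U \<and> wf_trm t)"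
| "wf_trm (Pi_app q t) = (q \<in> HH \<and> wf_trm t)"

text \<open>A literal (b, t, p): [t(x):p] if b, and \<not>[t(x):p] otherwise.\<close>
type_synonym 'n lit = "bool \<times> 'n trm \<times> 'n cvec set"

definition wf_lit :: "('n::finite) lit \<Rightarrow> bool" where
  "wf_lit l = (case l of (b, t, p) \<Rightarrow> wf_trm t \<and> p \<in> HH)"

section \<open>Structures: u (for u_U), prj (for pi_q), rel (for [. : p])\<close>

fun eval :: "('n::finite cmat \<Rightarrow> 'a \<Rightarrow> 'a) \<Rightarrow> ('n cvec set \<Rightarrow> 'a \<Rightarrow> 'a) \<Rightarrow> 'n trm \<Rightarrow> 'a \<Rightarrow> 'a" where
  "eval u prj Var x = x"
| "eval u prj (U_app U t) x = u U (eval u prj t x)"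
| "eval u prj (Pi_app q t) x = prj q (eval u prj t x)"

definition sat_lits :: "('n::finite cmat \<Rightarrow> 'a \<Rightarrow> 'a) \<Rightarrow> ('n cvec set \<Rightarrow> 'a \<Rightarrow> 'a)
    \<Rightarrow> ('n cvec set \<Rightarrow> 'a \<Rightarrow> bool) \<Rightarrow> 'n lit list \<Rightarrow> 'a \<Rightarrow> bool" where
  "sat_lits u prj rel phi x = (\<forall>(b, t, p) \<in> set phi. rel p (eval u prj t x) = b)"

definition PQM_model :: "('n::finite cmat \<Rightarrow> 'a \<Rightarrow> 'a) \<Rightarrow> ('n cvec set \<Rightarrow> 'a \<Rightarrow> 'a)
    \<Rightarrow> ('n cvec set \<Rightarrow> 'a \<Rightarrow> bool) \<Rightarrow> bool" where
  "PQM_model u prj rel \<longleftrightarrow>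
     (\<exists>x. \<not> rel botS x) \<and>
     (\<forall>x. rel topS x) \<and>
     (\<forall>p\<in>HH. \<forall>q\<in>HH. p \<subseteq> q \<longrightarrow> (\<forall>x. rel p x \<longrightarrow> rel q x)) \<and>
     (\<forall>p\<in>HH. \<forall>q\<in>HH. compatible p q \<longrightarrow> (\<forall>x. rel p x \<and> rel q x \<longrightarrow> rel (p \<inter> q) x)) \<and>
     (\<forall>p\<in>HH. \<forall>q\<in>HH. \<forall>x. rel p x \<longrightarrow> rel (sasaki p q) (prj q x)) \<and>
     (\<forall>p\<in>HH. \<forall>q\<in>HH. p \<subseteq> q \<longrightarrow> (\<forall>x. rel botS (prj p (prj q x)) \<longrightarrow> rel botS (prj p x))) \<and>
     (\<forall>q\<in>HH. \<forall>x. rel botS (prj q x) \<longrightarrow> rel (ortho q) x) \<and>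
     (\<forall>p\<in>HH. \<forall>U. unitary U \<longrightarrow> (\<forall>x. rel p x \<longrightarrow> rel (uimg U p) (u U x))) \<and>
     (\<forall>p\<in>HH. \<forall>U. unitary U \<longrightarrow> (\<forall>x. rel p (u U x) \<longrightarrow> rel (uinvimg U p) x))"

text \<open>Domain: rays together with bot, i.e. the complex spans of single vectors.\<close>
definition VV :: "'n::finite cvec set set" where
  "VV = {{c *s v | c. True} | v. True}"

definition V_u :: "'n::finite cmat \<Rightarrow> 'n cvec set \<Rightarrow> 'n cvec set" where
  "V_u U x = uimg U x"

definition V_pi :: "'n::finite cvec set \<Rightarrow> 'n cvec set \<Rightarrow> 'n cvec set" where
  "V_pi q x = sasaki x q"

definition V_rel :: "'n::finite cvec set \<Rightarrow> 'n cvec set \<Rightarrow> bool" where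
  "V_rel p x \<longleftrightarrow> x \<subseteq> p"

end

theory Submission
  imports Defs "HOL-Library.Quadratic_Discriminant"
begin

(* Fix a witness ray X of the formula in V_d. We find an element m of the model that "represents"
   X, i.e. [m : p] holds exactly for the subspaces p containing X. Representation is preserved by
   u_U and pi_q, so every term t(m) represents t(X) and m satisfies the same literals as X.

   The heart of the matter is that an element m with not [m : bot] lies in at most one ray. If m
   lies in two rays at an angle with tan^2 = s > 0, then the axioms for pi_q and compatible meets
   put m into a whole one-parameter family of rays spanned by vectors in three pairwise orthogonal
   directions (this needs d >= 3), among which two rays have tan^2 = s + s^2/4. Iterating makes
   tan^2 >= 10, and then the family contains two orthogonal rays, whose meet bot contains m. *)

section \<open>The Hermitian inner product\<close>

lemma hinner_add_left: "hinner (a + b) c = hinner a c + hinner b c"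
  by (simp add: hinner_def sum.distrib algebra_simps)

lemma hinner_add_right: "hinner c (a + b) = hinner c a + hinner c b"
  by (simp add: hinner_def sum.distrib algebra_simps)

lemma hinner_diff_left: "hinner (a - b) c = hinner a c - hinner b c"
  by (simp add: hinner_def sum_subtractf algebra_simps)

lemma hinner_diff_right: "hinner c (a - b) = hinner c a - hinner c b"
  by (simp add: hinner_def sum_subtractf algebra_simps)

lemma hinner_smult_left: "hinner (k *s a) c = k * hinner a c"
  by (simp add: hinner_def sum_distrib_left algebra_simps)

lemma hinner_smult_right: "hinner c (k *s a) = cnj k * hinner c a"
  by (simp add: hinner_def sum_distrib_left algebra_simps)

lemma hinner_zero_left [simp]: "hinner 0 a = 0"
  by (simp add: hinner_def)

lemma hinner_zero_right [simp]: "hinner a 0 = 0"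
  by (simp add: hinner_def)

lemmas hinner_simps = hinner_add_left hinner_add_right hinner_diff_left hinner_diff_right
  hinner_smult_left hinner_smult_right

lemma hinner_commute: "hinner b a = cnj (hinner a b)"
  by (simp add: hinner_def mult.commute)

lemma hinner_eq_0_commute: "hinner b a = 0 \<longleftrightarrow> hinner a b = 0"
  by (metis complex_cnj_zero_iff hinner_commute)

lemma hinner_self: "hinner a a = of_real (norm a ^ 2)"
proof -
  have "hinner a a = (\<Sum>i\<in>UNIV. of_real ((cmod (a $ i))\<^sup>2))"
    unfolding hinner_def by (intro sum.cong refl) (metis complex_norm_square)
  also have "\<dots> = of_real (norm a ^ 2)"
    by (simp add: norm_vec_def L2_set_def sum_nonneg)
  finally show ?thesis .
qed

lemma hinner_self_eq_0 [simp]: "hinner a a = 0 \<longleftrightarrow> a = 0"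
  by (simp add: hinner_self)

lemma norm_sq_eq_if_hinner_self: "hinner a a = of_real r \<Longrightarrow> norm a ^ 2 = r"
  by (metis hinner_self of_real_eq_iff)

lemma hinner_eq_0_iff_inner: "hinner x y = 0 \<longleftrightarrow> inner x y = 0 \<and> inner x (\<i> *s y) = 0"
proof -
  have "inner x y = Re (hinner x y)" "inner x (\<i> *s y) = Im (hinner x y)"
    by (simp_all add: inner_vec_def hinner_def inner_complex_def Re_sum Im_sum algebra_simps)
  then show ?thesis by (simp add: complex_eq_iff)
qed

lemma hinner_axis_right: "hinner v (axis j 1) = v $ j"
  unfolding hinner_def axis_def by (simp add: if_distrib cong: if_cong)

lemma norm_sq_eq_Re_hinner: "norm a ^ 2 = Re (hinner a a)"
  by (simp add: hinner_self)

lemma hinner_self_smult: "hinner (c *s a) (c *s a) = of_real (cmod c ^ 2) * hinner a a"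
proof -
  have "hinner (c *s a) (c *s a) = (c * cnj c) * hinner a a"
    by (simp add: hinner_simps mult.assoc)
  then show ?thesis
    by (simp only: complex_norm_square)
qed

lemma norm_sq_smult: "norm (c *s a) ^ 2 = cmod c ^ 2 * norm a ^ 2"
  by (simp add: norm_sq_eq_Re_hinner hinner_self_smult)

lemma norm_smult: "norm (c *s a) = cmod c * norm a"
proof (rule power2_eq_imp_eq)
  show "norm (c *s a) ^ 2 = (cmod c * norm a) ^ 2"
    by (simp add: norm_sq_smult power_mult_distrib)
qed simp_all

lemma pythagoras_hinner:
  assumes "hinner w b = 0"
  shows "norm (b + w) ^ 2 = norm b ^ 2 + norm w ^ 2"
proof -
  have "hinner b w = 0"
    using assms hinner_eq_0_commute by blast
  then show ?thesis
    using assms by (simp add: norm_sq_eq_Re_hinner hinner_simps)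
qed

section \<open>Subspaces and rays\<close>

lemma mem_HH_iff: "p \<in> HH \<longleftrightarrow> vec.subspace p"
  by (simp add: HH_def csubspace_def vec.subspace_def)

lemma vec_subspace_imp_subspace:
  fixes S :: "'n::finite cvec set"
  shows "vec.subspace S \<Longrightarrow> subspace S"
proof -
  have "r *\<^sub>R v = complex_of_real r *s v" for r and v :: "'n::finite cvec"
    by (simp add: vec_eq_iff) (metis scaleR_conv_of_real vector_scaleR_component)
  then show "vec.subspace S \<Longrightarrow> subspace S"
    by (simp add: vec.subspace_def subspace_def)
qed

lemma ortho_in_HH [simp]: "ortho S \<in> HH"
  by (simp add: mem_HH_iff vec.subspace_def ortho_def hinner_simps)

lemma botS_in_HH [simp]: "botS \<in> HH" and topS_in_HH [simp]: "topS \<in> HH"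
  by (simp_all add: mem_HH_iff botS_def topS_def)

lemma inter_in_HH: "p \<in> HH \<Longrightarrow> q \<in> HH \<Longrightarrow> p \<inter> q \<in> HH"
  by (simp add: mem_HH_iff vec.subspace_inter)

lemma ssum_eq_span:
  assumes "vec.subspace p" "vec.subspace q"
  shows "ssum p q = vec.span (p \<union> q)"
proof -
  have spans: "vec.span p = p" "vec.span q = q"
    using assms vec.span_eq_iff by blast+
  show ?thesis
    unfolding ssum_def vec.span_Un spans by auto
qed

lemma ssum_in_HH: "p \<in> HH \<Longrightarrow> q \<in> HH \<Longrightarrow> ssum p q \<in> HH"
  by (simp add: mem_HH_iff ssum_eq_span)

lemma sasaki_in_HH: "p \<in> HH \<Longrightarrow> q \<in> HH \<Longrightarrow> sasaki p q \<in> HH"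
  by (simp add: sasaki_def inter_in_HH ssum_in_HH)

lemma ortho_orthoD: "z \<in> ortho p \<Longrightarrow> w \<in> p \<Longrightarrow> hinner z w = 0"
  by (simp add: ortho_def)

lemma orthogonal_decomposition:
  assumes "p \<in> HH"
  obtains y z where "y \<in> p" "z \<in> ortho p" "v = y + z"
proof -
  have p: "span p = p" "vec.subspace p"
    using assms vec_subspace_imp_subspace by (auto simp: mem_HH_iff span_eq_iff)
  obtain y z where "y \<in> p" "\<And>w. w \<in> p \<Longrightarrow> orthogonal z w" "v = y + z"
    using orthogonal_subspace_decomp_exists[of p v] p by auto
  moreover have "z \<in> ortho p"
    unfolding ortho_def
    using calculation(2) p by (auto simp: hinner_eq_0_iff_inner orthogonal_def vec.subspace_scale)
  ultimately show ?thesis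
    using that by blast
qed

lemma exists_orthogonal_to_two:
  fixes a b :: "'n::finite cvec"
  assumes "CARD('n) \<ge> 3"
  obtains x where "x \<noteq> 0" "hinner x a = 0" "hinner x b = 0"
proof -
  let ?S = "{a, \<i> *s a, b, \<i> *s b}"
  have "dim ?S \<le> card ?S"
    by (rule dim_le_card) (auto intro: span_base)
  also have "card ?S \<le> 4"
    using card_length[of "[a, \<i> *s a, b, \<i> *s b]"] by simp
  finally have "dim ?S < DIM('n cvec)"
    using assms by simp
  then obtain x where "x \<noteq> 0" "\<And>y. y \<in> span ?S \<Longrightarrow> orthogonal x y"
    using orthogonal_to_subspace_exists by blast
  then show ?thesis
    by (intro that) (auto simp: hinner_eq_0_iff_inner orthogonal_def intro: span_base)
qed

definition ray :: "'n::finite cvec \<Rightarrow> 'n cvec set" where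
  "ray v = {c *s v | c. True}"

lemma ray_eq_span: "ray v = vec.span {v}"
  by (auto simp: ray_def vec.span_singleton)

lemma VV_eq_range_ray: "VV = range ray"
  by (auto simp: VV_def ray_def)

lemma ray_in_HH [simp]: "ray v \<in> HH"
  by (simp add: mem_HH_iff ray_eq_span)

lemma mem_ray_iff: "w \<in> ray v \<longleftrightarrow> (\<exists>c. w = c *s v)"
  by (auto simp: ray_def)

lemma mem_ray_self [simp]: "v \<in> ray v"
  by (simp add: ray_eq_span vec.span_base)

lemma ray_subset_iff:
  assumes "p \<in> HH"
  shows "ray v \<subseteq> p \<longleftrightarrow> v \<in> p"
proof
  show "ray v \<subseteq> p \<Longrightarrow> v \<in> p"
    using mem_ray_self by blast
  show "v \<in> p \<Longrightarrow> ray v \<subseteq> p"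
    using assms unfolding ray_eq_span mem_HH_iff by (simp add: vec.span_minimal)
qed

lemma ray_0 [simp]: "ray 0 = botS"
  by (auto simp: ray_def botS_def)

lemma ray_eq_botS_iff: "ray v = botS \<longleftrightarrow> v = 0"
proof
  show "ray v = botS \<Longrightarrow> v = 0"
    using mem_ray_self[of v] by (simp add: botS_def)
qed simp

lemma ray_smult:
  assumes "c \<noteq> 0"
  shows "ray (c *s v) = ray v"
proof
  show "ray (c *s v) \<subseteq> ray v"
    unfolding mem_ray_iff subset_iff by (metis vector_smult_assoc)
  show "ray v \<subseteq> ray (c *s v)"
  proof
    fix w assume "w \<in> ray v"
    then obtain d where "w = d *s v"
      by (auto simp: mem_ray_iff)
    then have "w = (d / c) *s (c *s v)"
      using assms by (simp add: vector_smult_assoc)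
    then show "w \<in> ray (c *s v)"
      unfolding mem_ray_iff by blast
  qed
qed

lemma ortho_ray: "ortho (ray f) = {v. hinner v f = 0}"
proof -
  have "(\<forall>w\<in>ray f. hinner v w = 0) \<longleftrightarrow> hinner v f = 0" for v
  proof
    show "\<forall>w\<in>ray f. hinner v w = 0 \<Longrightarrow> hinner v f = 0"
      using mem_ray_self by blast
    show "hinner v f = 0 \<Longrightarrow> \<forall>w\<in>ray f. hinner v w = 0"
      by (auto simp: mem_ray_iff hinner_smult_right)
  qed
  then show ?thesis
    by (simp add: ortho_def)
qed

lemma compatible_ortho_ray:
  assumes q: "q \<in> HH" and f: "f \<in> q"
  shows "compatible (ortho (ray f)) q"
  unfolding compatible_def
proof
  have "vec.subspace (ortho (ray f))"
    using ortho_in_HH mem_HH_iff by blast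
  then show "ssum (ortho (ray f) \<inter> q) (ortho (ray f) \<inter> ortho q) \<subseteq> ortho (ray f)"
    unfolding ssum_def by (auto intro: vec.subspace_add)
next
  show "ortho (ray f) \<subseteq> ssum (ortho (ray f) \<inter> q) (ortho (ray f) \<inter> ortho q)"
  proof
    fix v assume v: "v \<in> ortho (ray f)"
    obtain y z where y: "y \<in> q" and z: "z \<in> ortho q" and v_eq: "v = y + z"
      using orthogonal_decomposition[OF q] by blast
    have "hinner z f = 0"
      using z f by (rule ortho_orthoD)
    then have "z \<in> ortho (ray f)" and "y \<in> ortho (ray f)"
      using v v_eq by (simp_all add: ortho_ray hinner_simps)
    then show "v \<in> ssum (ortho (ray f) \<inter> q) (ortho (ray f) \<inter> ortho q)"
      using y z v_eq unfolding ssum_def by blast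
  qed
qed

lemma sasaki_ray:
  assumes q: "q \<in> HH" and y: "y \<in> q" and z: "z \<in> ortho q"
  shows "sasaki (ray (y + z)) q = ray y"
proof
  have q': "vec.subspace q" and o: "vec.subspace (ortho q)"
    using q mem_HH_iff ortho_in_HH by blast+
  show "ray y \<subseteq> sasaki (ray (y + z)) q"
  proof
    fix w assume "w \<in> ray y"
    then obtain c where w: "w = c *s y"
      by (auto simp: mem_ray_iff)
    have "w = (- c) *s z + c *s (y + z)"
      unfolding w by (simp add: vec_eq_iff algebra_simps)
    moreover have "(- c) *s z \<in> ortho q"
      by (rule vec.subspace_scale[OF o z])
    moreover have "c *s (y + z) \<in> ray (y + z)"
      unfolding mem_ray_iff by blast
    moreover have "w \<in> q"
      unfolding w by (rule vec.subspace_scale[OF q' y])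
    ultimately show "w \<in> sasaki (ray (y + z)) q"
      unfolding sasaki_def ssum_def by blast
  qed
  show "sasaki (ray (y + z)) q \<subseteq> ray y"
  proof
    fix w assume "w \<in> sasaki (ray (y + z)) q"
    then obtain a c where w: "w \<in> q" "w = a + c *s (y + z)" "a \<in> ortho q"
      unfolding sasaki_def ssum_def by (auto simp: mem_ray_iff)
    have "w - c *s y \<in> q"
      using w(1) by (intro vec.subspace_diff[OF q'] vec.subspace_scale[OF q' y])
    moreover have "w - c *s y \<in> ortho q"
    proof -
      have "w - c *s y = a + c *s z"
        unfolding w(2) by (simp add: vec_eq_iff algebra_simps)
      then show ?thesis
        using w(3) z by (metis vec.subspace_add vec.subspace_scale o)
    qed
    ultimately have "w - c *s y = 0"
      using ortho_orthoD hinner_self_eq_0 by blast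
    then show "w \<in> ray y"
      by (auto simp: mem_ray_iff)
  qed
qed

lemma sasaki_ray_ray: "sasaki (ray a) (ray b) = ray ((hinner a b / hinner b b) *s b)"
proof -
  define y where "y = (hinner a b / hinner b b) *s b"
  have "a - y \<in> ortho (ray b)"
  proof (cases "b = 0")
    case True
    then show ?thesis
      by (simp add: ortho_def botS_def)
  next
    case False
    then show ?thesis
      by (simp add: y_def ortho_ray hinner_simps)
  qed
  moreover have "y \<in> ray b"
    by (auto simp: y_def mem_ray_iff)
  ultimately show ?thesis
    using sasaki_ray[of "ray b" y "a - y"] unfolding y_def by simp
qed

lemma uimg_ray: "uimg U (ray v) = ray (U *v v)"
  unfolding uimg_def ray_eq_span vec.span_singleton image_image
  by (simp add: vector_scalar_commute)

lemma unitary_mult_eq_0_iff: "unitary U \<Longrightarrow> U *v v = 0 \<longleftrightarrow> v = 0"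
  unfolding unitary_def
  by (metis matrix_vector_mul_assoc matrix_vector_mul_lid matrix_vector_mult_0_right)

lemma uinvimg_botS: "unitary U \<Longrightarrow> uinvimg U botS = botS"
  by (auto simp: uinvimg_def botS_def unitary_mult_eq_0_iff)

lemma sasaki_subset_botS_if_subset_ortho:
  assumes "p \<subseteq> ortho q"
  shows "sasaki p q \<subseteq> botS"
proof
  fix v assume v: "v \<in> sasaki p q"
  have "vec.subspace (ortho q)"
    using ortho_in_HH mem_HH_iff by blast
  then have "v \<in> ortho q"
    using v assms unfolding sasaki_def ssum_def by (auto intro: vec.subspace_add)
  then show "v \<in> botS"
    using v ortho_orthoD[of v q v] by (simp add: sasaki_def botS_def)
qed

section \<open>Angles between rays\<close>

definition tan_sq_angle :: "'n::finite cvec \<Rightarrow> 'n cvec \<Rightarrow> real" where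
  "tan_sq_angle U W = (norm W ^ 2 * norm U ^ 2 - cmod (hinner W U) ^ 2) / cmod (hinner W U) ^ 2"

lemma split_along_ray:
  assumes U: "U \<noteq> 0" and WU: "hinner W U \<noteq> 0"
  obtains b w where "ray b = ray U" "W = b + w" "hinner w b = 0"
    "norm w ^ 2 = tan_sq_angle U W * norm b ^ 2"
proof -
  define H where "H = hinner W U"
  define a where "a = norm U ^ 2"
  define b where "b = (H / of_real a) *s U"
  define w where "w = W - b"
  have a: "a > 0"
    using U by (simp add: a_def)
  have H: "H \<noteq> 0"
    using WU by (simp add: H_def)
  have "ray b = ray U"
    unfolding b_def using a H by (simp add: ray_smult)
  moreover have "W = b + w"
    by (simp add: w_def)
  moreover have wb: "hinner w b = 0"
    using a unfolding w_def b_def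
    by (simp add: hinner_simps hinner_self a_def[symmetric] H_def[symmetric] field_simps)
  moreover have "norm w ^ 2 = tan_sq_angle U W * norm b ^ 2"
  proof -
    have "norm b ^ 2 = cmod (H / of_real a) ^ 2 * a"
      by (simp only: b_def norm_sq_smult a_def[symmetric])
    also have "\<dots> = cmod H ^ 2 / a"
      using a by (simp add: norm_divide power_divide power2_eq_square)
    finally have nb: "norm b ^ 2 = cmod H ^ 2 / a" .
    have "norm W ^ 2 = norm b ^ 2 + norm w ^ 2"
      using pythagoras_hinner[OF wb] by (simp add: w_def)
    then show ?thesis
      using a H unfolding nb tan_sq_angle_def H_def[symmetric] a_def[symmetric]
      by (simp add: field_simps)
  qed
  ultimately show ?thesis
    using that by blast
qed

lemma ray_eq_if_not_tan_sq_angle_pos: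
  assumes "U \<noteq> 0" "hinner W U \<noteq> 0" "\<not> 0 < tan_sq_angle U W"
  shows "ray W = ray U"
proof -
  obtain b w where bU: "ray b = ray U" and Wbw: "W = b + w"
    and nw: "norm w ^ 2 = tan_sq_angle U W * norm b ^ 2"
    using split_along_ray[OF assms(1,2)] by metis
  have "norm w ^ 2 \<le> 0"
    using assms(3) unfolding nw by (simp add: mult_nonpos_nonneg)
  then have "w = 0"
    by simp
  then show ?thesis
    using bU Wbw by simp
qed

text \<open>For pairwise orthogonal \<open>b, w, n\<close> with \<open>\<parallel>n\<parallel> = \<parallel>w\<parallel> \<noteq> 0\<close>, \<open>fan_vec b w n l\<close> is a nonzero
  multiple of the projection of \<open>b + w\<close> onto the orthogonal complement of \<open>w + l n\<close>.\<close>
definition fan_vec :: "'n::finite cvec \<Rightarrow> 'n cvec \<Rightarrow> 'n cvec \<Rightarrow> real \<Rightarrow> 'n cvec" where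
  "fan_vec b w n l = of_real (1 + l\<^sup>2) *s b + of_real (l\<^sup>2) *s w - of_real l *s n"

lemma hinner_fan_vec:
  assumes "hinner w b = 0" "hinner n b = 0" "hinner n w = 0" "norm n = norm w"
  shows "hinner (fan_vec b w n l) (fan_vec b w n l') =
    of_real ((1 + l\<^sup>2) * (1 + l'\<^sup>2) * norm b ^ 2 + (l\<^sup>2 * l'\<^sup>2 + l * l') * norm w ^ 2)"
proof -
  have "hinner b w = 0" "hinner b n = 0" "hinner w n = 0"
    using assms(1-3) hinner_eq_0_commute by blast+
  then show ?thesis
    using assms unfolding fan_vec_def
    by (simp add: hinner_simps hinner_self algebra_simps power2_eq_square)
qed

section \<open>Models of \<open>PQM_d\<close>\<close>

locale pqm =
  fixes u :: "'n::finite cmat \<Rightarrow> 'a \<Rightarrow> 'a"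
    and prj :: "'n cvec set \<Rightarrow> 'a \<Rightarrow> 'a"
    and rel :: "'n cvec set \<Rightarrow> 'a \<Rightarrow> bool"
  assumes ex_not_rel_botS: "\<exists>x. \<not> rel botS x"
    and rel_topS_ax: "\<forall>x. rel topS x"
    and rel_mono_ax: "\<forall>p\<in>HH. \<forall>q\<in>HH. p \<subseteq> q \<longrightarrow> (\<forall>x. rel p x \<longrightarrow> rel q x)"
    and rel_inter_ax: "\<forall>p\<in>HH. \<forall>q\<in>HH. compatible p q \<longrightarrow> (\<forall>x. rel p x \<and> rel q x \<longrightarrow> rel (p \<inter> q) x)"
    and rel_prj_ax: "\<forall>p\<in>HH. \<forall>q\<in>HH. \<forall>x. rel p x \<longrightarrow> rel (sasaki p q) (prj q x)"
    and rel_prj_botS_ax: "\<forall>q\<in>HH. \<forall>x. rel botS (prj q x) \<longrightarrow> rel (ortho q) x"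
    and rel_uimg_ax: "\<forall>p\<in>HH. \<forall>U. unitary U \<longrightarrow> (\<forall>x. rel p x \<longrightarrow> rel (uimg U p) (u U x))"
    and rel_uinvimg_ax: "\<forall>p\<in>HH. \<forall>U. unitary U \<longrightarrow> (\<forall>x. rel p (u U x) \<longrightarrow> rel (uinvimg U p) x)"

lemma pqm_if_PQM_model: "PQM_model u prj rel \<Longrightarrow> pqm u prj rel"
  unfolding PQM_model_def pqm_def by (elim conjE) (intro conjI; assumption)

context pqm
begin

lemmas rel_topS = rel_topS_ax[rule_format]
  and rel_mono = rel_mono_ax[rule_format]
  and rel_prj_sasaki = rel_prj_ax[rule_format]
  and rel_ortho_if_prj_botS = rel_prj_botS_ax[rule_format]
  and rel_uimg = rel_uimg_ax[rule_format]
  and rel_uinvimg = rel_uinvimg_ax[rule_format]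

lemma rel_inter: "p \<in> HH \<Longrightarrow> q \<in> HH \<Longrightarrow> compatible p q \<Longrightarrow> rel p x \<Longrightarrow> rel q x \<Longrightarrow> rel (p \<inter> q) x"
  using rel_inter_ax by blast

lemma rel_if_rel_botS: "rel botS x \<Longrightarrow> p \<in> HH \<Longrightarrow> rel p x"
  by (erule rel_mono[rotated 3]) (auto simp: mem_HH_iff botS_def vec.subspace_0)

lemma rel_ortho_if_subset_ortho:
  assumes p: "p \<in> HH" and q: "q \<in> HH" and pq: "p \<subseteq> ortho q" and x: "rel p x"
  shows "rel (ortho q) x"
proof -
  have "rel (sasaki p q) (prj q x)"
    by (rule rel_prj_sasaki[OF p q x])
  then have "rel botS (prj q x)"
    by (rule rel_mono[OF sasaki_in_HH[OF p q] botS_in_HH sasaki_subset_botS_if_subset_ortho[OF pq]])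
  then show ?thesis
    by (rule rel_ortho_if_prj_botS[OF q])
qed

text \<open>\<open>f\<^sup>\<bottom>\<close> is compatible with \<open>span {w, f}\<close>, and their meet is the ray of the projection of \<open>w\<close>
  onto \<open>f\<^sup>\<bottom>\<close>.\<close>
lemma rel_ray_proj_ortho:
  assumes f: "f \<noteq> 0" and P: "rel (ortho (ray f)) x" and W: "rel (ray w) x"
  shows "rel (ray (hinner f f *s w - hinner w f *s f)) x"
proof -
  define Q where "Q = ssum (ray w) (ray f)"
  have Q: "Q \<in> HH"
    by (simp add: Q_def ssum_in_HH)
  have mem_Q: "v \<in> Q \<longleftrightarrow> (\<exists>c d. v = c *s w + d *s f)" for v
    by (auto simp: Q_def ssum_def mem_ray_iff)
  have "f \<in> Q"
    unfolding mem_Q by (intro exI[of _ 0] exI[of _ 1]) simp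
  moreover have "rel Q x"
  proof (rule rel_mono[OF ray_in_HH Q _ W])
    show "ray w \<subseteq> Q"
      unfolding mem_ray_iff mem_Q subset_iff by (metis add_0_right vector_smult_lzero)
  qed
  ultimately have "rel (ortho (ray f) \<inter> Q) x"
    using rel_inter[OF ortho_in_HH Q compatible_ortho_ray[OF Q] P] by blast
  moreover have "ortho (ray f) \<inter> Q \<subseteq> ray (hinner f f *s w - hinner w f *s f)"
  proof
    fix v assume "v \<in> ortho (ray f) \<inter> Q"
    then obtain c d where v: "v = c *s w + d *s f" "hinner v f = 0"
      by (auto simp: ortho_ray mem_Q)
    then have "d * hinner f f = - (c * hinner w f)"
      by (simp add: hinner_simps eq_neg_iff_add_eq_0 add.commute)
    then have "d = - (c * hinner w f) / hinner f f"
      using f by (simp add: field_simps)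
    then have "v = (c / hinner f f) *s (hinner f f *s w - hinner w f *s f)"
      using f v(1) by (simp add: vec_eq_iff field_simps)
    then show "v \<in> ray (hinner f f *s w - hinner w f *s f)"
      unfolding mem_ray_iff by blast
  qed
  ultimately show ?thesis
    by (rule rel_mono[OF inter_in_HH[OF ortho_in_HH Q] ray_in_HH, rotated])
qed

lemma rel_ray_proj:
  assumes "rel (ray a) x" "hinner a f = 0" "f \<noteq> 0" "rel (ray w) x"
  shows "rel (ray (hinner f f *s w - hinner w f *s f)) x"
proof -
  have "ray a \<subseteq> ortho (ray f)"
    using assms(2) ray_subset_iff[OF ortho_in_HH, of a "ray f"] by (simp add: ortho_ray)
  then have "rel (ortho (ray f)) x"
    by (rule rel_mono[OF ray_in_HH ortho_in_HH _ assms(1)])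
  then show ?thesis
    by (rule rel_ray_proj_ortho[OF assms(3) _ assms(4)])
qed

lemma rel_botS_if_orthogonal_rays:
  assumes "rel (ray a) x" "rel (ray b) x" "hinner a b = 0"
  shows "rel botS x"
proof (cases "b = 0")
  case True
  then show ?thesis
    using assms(2) by simp
next
  case False
  then show ?thesis
    using rel_ray_proj[OF assms(1,3) False assms(2)] by simp
qed

lemma rel_ray_fan_vec:
  assumes b: "rel (ray b) x" and bw: "rel (ray (b + w)) x"
    and orth: "hinner w b = 0" "hinner n b = 0" "hinner n w = 0"
    and n: "norm n = norm w" and w: "w \<noteq> 0"
  shows "rel (ray (fan_vec b w n l)) x"
proof -
  define d where "d = norm w ^ 2"
  define f where "f = w + of_real l *s n"
  have orth': "hinner b w = 0" "hinner b n = 0" "hinner w n = 0"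
    using orth hinner_eq_0_commute by blast+
  have d: "d > 0"
    using w by (simp add: d_def)
  have bf: "hinner b f = 0"
    using orth' by (simp add: f_def hinner_simps)
  have "hinner f f = hinner w w + of_real (l\<^sup>2) * hinner n n"
    using orth orth' by (simp add: f_def hinner_simps power2_eq_square)
  then have ff: "hinner f f = of_real ((1 + l\<^sup>2) * d)"
    using n by (simp add: hinner_self d_def distrib_right)
  have wf: "hinner (b + w) f = of_real d"
    using orth' by (simp add: f_def d_def hinner_simps hinner_self)
  have "(1 + l\<^sup>2) * d > 0"
    using d by (intro mult_pos_pos add_pos_nonneg) auto
  then have "f \<noteq> 0"
    using ff by (metis hinner_zero_left of_real_eq_0_iff less_irrefl)
  then have "rel (ray (hinner f f *s (b + w) - hinner (b + w) f *s f)) x"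
    by (rule rel_ray_proj[OF b bf _ bw])
  moreover have "hinner f f *s (b + w) - hinner (b + w) f *s f = of_real d *s fan_vec b w n l"
    unfolding ff wf by (simp add: f_def fan_vec_def vec_eq_iff algebra_simps)
  ultimately show ?thesis
    using d by (simp add: ray_smult)
qed

end

section \<open>An element other than \<open>\<bottom>\<close> lies in at most one ray\<close>

locale pqm3 = pqm u prj rel
  for u :: "'n::finite cmat \<Rightarrow> 'a \<Rightarrow> 'a" and prj and rel +
  assumes card_ge_3: "CARD('n) \<ge> 3"
begin

lemma rel_fan_family:
  assumes U: "rel (ray U) x" and W: "rel (ray W) x" and s: "tan_sq_angle U W = s" "s > 0"
  obtains K :: real and F :: "real \<Rightarrow> 'n cvec" where "K > 0" "\<And>l. rel (ray (F l)) x"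
    "\<And>l l'. hinner (F l) (F l') =
      of_real (K * ((1 + l\<^sup>2) * (1 + l'\<^sup>2) + s * (l\<^sup>2 * l'\<^sup>2 + l * l')))"
proof -
  have WU: "hinner W U \<noteq> 0"
    using s by (auto simp: tan_sq_angle_def)
  then have "U \<noteq> 0"
    by auto
  then obtain b w where bU: "ray b = ray U" and Wbw: "W = b + w" and wb: "hinner w b = 0"
    and nw: "norm w ^ 2 = s * norm b ^ 2"
    using split_along_ray[OF _ WU] s(1) by metis
  define K where "K = norm b ^ 2"
  have "b \<noteq> 0"
    using bU \<open>U \<noteq> 0\<close> by (metis ray_eq_botS_iff)
  then have K: "K > 0"
    by (simp add: K_def)
  then have "w \<noteq> 0"
    using nw s(2) by (auto simp: K_def)
  obtain n0 where n0: "n0 \<noteq> 0" "hinner n0 b = 0" "hinner n0 w = 0"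
    using exists_orthogonal_to_two[OF card_ge_3] by blast
  define n where "n = of_real (norm w / norm n0) *s n0"
  have n: "hinner n b = 0" "hinner n w = 0" "norm n = norm w"
    using n0 by (simp_all add: n_def hinner_simps norm_smult norm_divide)
  have "rel (ray (fan_vec b w n l)) x" for l
    using rel_ray_fan_vec[OF _ _ wb n \<open>w \<noteq> 0\<close>] U W bU Wbw by simp
  moreover have "hinner (fan_vec b w n l) (fan_vec b w n l') =
      of_real (K * ((1 + l\<^sup>2) * (1 + l'\<^sup>2) + s * (l\<^sup>2 * l'\<^sup>2 + l * l')))" for l l'
    unfolding hinner_fan_vec[OF wb n] nw K_def by (simp add: algebra_simps)
  ultimately show ?thesis
    using that K by blast
qed

lemma rel_rays_tan_sq_step:
  assumes "rel (ray U) x" "rel (ray W) x" "tan_sq_angle U W = s" "s > 0"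
  obtains U' W' where "rel (ray U') x" "rel (ray W') x" "tan_sq_angle U' W' = s + s\<^sup>2 / 4"
proof -
  obtain K F where K: "K > 0" and F: "\<And>l. rel (ray (F l)) x"
    and gram: "\<And>l l'. hinner (F l) (F l') =
      of_real (K * ((1 + l\<^sup>2) * (1 + l'\<^sup>2) + s * (l\<^sup>2 * l'\<^sup>2 + l * l')))"
    using rel_fan_family[OF assms] by metis
  have "norm (F 1) ^ 2 = K * (4 + 2 * s)" "norm (F (-1)) ^ 2 = K * (4 + 2 * s)"
    using norm_sq_eq_if_hinner_self[OF gram[of 1 1]] norm_sq_eq_if_hinner_self[OF gram[of "-1" "-1"]]
    by (simp_all add: algebra_simps)
  moreover have "hinner (F (-1)) (F 1) = of_real (4 * K)"
    unfolding gram by (simp add: algebra_simps)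
  then have "cmod (hinner (F (-1)) (F 1)) = 4 * K"
    using K by simp
  ultimately have "tan_sq_angle (F 1) (F (-1)) = ((K * (4 + 2 * s)) * (K * (4 + 2 * s)) - (4 * K)\<^sup>2) / (4 * K)\<^sup>2"
    by (simp add: tan_sq_angle_def)
  also have "\<dots> = s + s\<^sup>2 / 4"
    using K by (simp add: field_simps power2_eq_square)
  finally have "tan_sq_angle (F 1) (F (-1)) = s + s\<^sup>2 / 4" .
  then show ?thesis
    using that F by blast
qed

lemma rel_botS_if_tan_sq_ge:
  assumes U: "rel (ray U) x" and W: "rel (ray W) x" and s: "tan_sq_angle U W \<ge> 10"
  shows "rel botS x"
proof -
  define s where "s = tan_sq_angle U W"
  have s10: "s \<ge> 10"
    using s by (simp add: s_def)
  then have "s > 0"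
    by simp
  then obtain K F where K: "K > 0" and F: "\<And>l. rel (ray (F l)) x"
    and gram: "\<And>l l'. hinner (F l) (F l') =
      of_real (K * ((1 + l\<^sup>2) * (1 + l'\<^sup>2) + s * (l\<^sup>2 * l'\<^sup>2 + l * l')))"
    using rel_fan_family[OF U W s_def[symmetric]] by metis
  have "(6::real)\<^sup>2 \<le> (s - 4)\<^sup>2"
    by (rule power_mono) (use s10 in simp_all)
  then have "discrim (s + 2) s 2 \<ge> 0"
    by (simp add: discrim_def power2_eq_square algebra_simps)
  then obtain p where p: "(s + 2) * p\<^sup>2 + s * p + 2 = 0"
    using discriminant_nonneg_ex[of "s + 2" s 2] s10 by auto
  have "hinner (F 1) (F p) = of_real (K * ((s + 2) * p\<^sup>2 + s * p + 2))"
    unfolding gram by (simp add: algebra_simps)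
  then have "hinner (F 1) (F p) = 0"
    unfolding p by simp
  then show ?thesis
    by (rule rel_botS_if_orthogonal_rays[OF F F])
qed

lemma rel_rays_tan_sq_unbounded:
  assumes U: "rel (ray U) x" and W: "rel (ray W) x" and s: "tan_sq_angle U W = s" "s > 0"
  shows "\<exists>U' W'. rel (ray U') x \<and> rel (ray W') x \<and> s + real N * s\<^sup>2 / 4 \<le> tan_sq_angle U' W'"
proof (induction N)
  case 0
  then show ?case
    using U W s by auto
next
  case (Suc N)
  then obtain U' W' where U': "rel (ray U') x" and W': "rel (ray W') x"
    and t: "s + real N * s\<^sup>2 / 4 \<le> tan_sq_angle U' W'"
    by blast
  define t where "t = tan_sq_angle U' W'"
  have "0 \<le> real N * s\<^sup>2 / 4"
    by simp
  then have st: "s \<le> t"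
    using t unfolding t_def[symmetric] by linarith
  obtain U'' W'' where U'': "rel (ray U'') x" and W'': "rel (ray W'') x"
    and t': "tan_sq_angle U'' W'' = t + t\<^sup>2 / 4"
    using rel_rays_tan_sq_step[OF U' W' t_def[symmetric]] st s(2) by auto
  have "s\<^sup>2 \<le> t\<^sup>2"
    using st s(2) by (simp add: power_mono)
  then have "s + real (Suc N) * s\<^sup>2 / 4 \<le> tan_sq_angle U'' W''"
    using t unfolding t' t_def[symmetric] by (simp add: field_simps)
  then show ?case
    using U'' W'' by blast
qed

lemma rel_rays_eq:
  assumes nb: "\<not> rel botS x" and U: "rel (ray U) x" and W: "rel (ray W) x"
  shows "ray U = ray W"
proof -
  have "U \<noteq> 0"
    using U nb by auto
  have WU: "hinner W U \<noteq> 0"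
    using rel_botS_if_orthogonal_rays[OF W U] nb by blast
  define s where "s = tan_sq_angle U W"
  show ?thesis
  proof (cases "s > 0")
    case True
    obtain N :: nat where "40 / s\<^sup>2 < real N"
      using reals_Archimedean2 by blast
    then have "10 \<le> s + real N * s\<^sup>2 / 4"
      using True by (simp add: field_simps)
    then obtain U' W' where "rel (ray U') x" "rel (ray W') x" "10 \<le> tan_sq_angle U' W'"
      using rel_rays_tan_sq_unbounded[OF U W s_def[symmetric] True, of N] by auto
    then show ?thesis
      using rel_botS_if_tan_sq_ge nb by blast
  next
    case False
    then show ?thesis
      using ray_eq_if_not_tan_sq_angle_pos[OF \<open>U \<noteq> 0\<close> WU] by (simp add: s_def)
  qed
qed

lemma mem_if_rel_ray:
  assumes nb: "\<not> rel botS x" and v: "rel (ray v) x" and p: "p \<in> HH" "rel p x"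
  shows "v \<in> p"
proof -
  obtain y z where y: "y \<in> p" and z: "z \<in> ortho p" and vyz: "v = y + z"
    using orthogonal_decomposition[OF p(1)] by blast
  show ?thesis
  proof (cases "z = 0")
    case True
    then show ?thesis
      using y vyz by simp
  next
    case False
    have "p \<subseteq> ortho (ray z)"
    proof
      fix w assume "w \<in> p"
      then have "hinner z w = 0"
        by (rule ortho_orthoD[OF z])
      then show "w \<in> ortho (ray z)"
        by (simp add: ortho_ray hinner_eq_0_commute)
    qed
    then have "rel (ortho (ray z)) x"
      by (rule rel_ortho_if_subset_ortho[OF p(1) ray_in_HH _ p(2)])
    then have "rel (ray (hinner z z *s v - hinner v z *s z)) x"
      by (rule rel_ray_proj_ortho[OF False _ v])
    moreover have "hinner y z = 0"
      using ortho_orthoD[OF z y] hinner_eq_0_commute by blast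
    then have "hinner v z = hinner z z"
      by (simp add: vyz hinner_simps)
    then have "hinner z z *s v - hinner v z *s z = hinner z z *s y"
      unfolding vyz by (simp add: vector_add_ldistrib)
    ultimately have "rel (ray y) x"
      using False by (simp add: ray_smult)
    then have "ray v = ray y"
      by (rule rel_rays_eq[OF nb v])
    moreover have "ray y \<subseteq> p"
      using ray_subset_iff[OF p(1)] y by blast
    ultimately show ?thesis
      using mem_ray_self by blast
  qed
qed

end

section \<open>Representing rays of the vector model\<close>

context pqm
begin

lemma rel_botS_if_rel_ortho_axes:
  assumes orth: "\<And>i. rel (ortho (ray (axis i 1))) m"
  shows "rel botS m"
proof -
  have "rel {v. \<forall>i\<in>S. v $ i = 0} m" if "finite S" for S
    using that
  proof (induction S rule: finite_induct)
    case empty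
    then show ?case
      using rel_topS by (simp add: topS_def)
  next
    case (insert j S)
    let ?Z = "{v :: 'n cvec. \<forall>i\<in>S. v $ i = 0}"
    have Z: "?Z \<in> HH"
      by (simp add: mem_HH_iff vec.subspace_def)
    have "axis j 1 \<in> ?Z"
      using insert.hyps(2) by (auto simp: axis_def)
    then have "rel (ortho (ray (axis j 1)) \<inter> ?Z) m"
      by (intro rel_inter[OF ortho_in_HH Z compatible_ortho_ray[OF Z] orth insert.IH])
    moreover have "ortho (ray (axis j 1)) \<inter> ?Z = {v. \<forall>i\<in>insert j S. v $ i = 0}"
      by (auto simp: ortho_ray hinner_axis_right)
    ultimately show ?case
      by simp
  qed
  from this[OF finite_class.finite_UNIV] have "rel {v. \<forall>i\<in>UNIV. v $ i = 0} m" .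
  moreover have "{v :: 'n cvec. \<forall>i\<in>UNIV. v $ i = 0} = botS"
    by (auto simp: botS_def vec_eq_iff)
  ultimately show ?thesis
    by simp
qed

lemma ex_rel_ray_not_botS:
  obtains m e where "e \<noteq> 0" "rel (ray e) m" "\<not> rel botS m"
proof -
  obtain m0 where m0: "\<not> rel botS m0"
    using ex_not_rel_botS by blast
  have "\<not> (\<forall>i. rel botS (prj (ray (axis i 1)) m0))"
    using m0 rel_botS_if_rel_ortho_axes[of m0] rel_ortho_if_prj_botS[OF ray_in_HH] by metis
  then obtain i where i: "\<not> rel botS (prj (ray (axis i 1)) m0)"
    by blast
  have "rel (sasaki topS (ray (axis i 1))) (prj (ray (axis i 1)) m0)"
    by (rule rel_prj_sasaki[OF topS_in_HH ray_in_HH rel_topS])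
  then have "rel (ray (axis i 1)) (prj (ray (axis i 1)) m0)"
    by (rule rel_mono[OF sasaki_in_HH[OF topS_in_HH ray_in_HH] ray_in_HH, rotated])
      (auto simp: sasaki_def)
  moreover have "axis i (1::complex) \<noteq> 0"
    by (simp add: axis_eq_0_iff)
  ultimately show ?thesis
    using that i by blast
qed

definition represents :: "'a \<Rightarrow> 'n cvec set \<Rightarrow> bool" where
  "represents m X \<longleftrightarrow> X \<in> VV \<and> (\<forall>p\<in>HH. rel p m \<longleftrightarrow> X \<subseteq> p)"

lemma represents_rayD:
  assumes "represents m (ray v)"
  shows "rel (ray v) m" and "rel botS m \<Longrightarrow> v = 0"
proof -
  have iff: "rel p m \<longleftrightarrow> v \<in> p" if "p \<in> HH" for p
    using assms ray_subset_iff[OF that] that by (simp add: represents_def)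
  show "rel (ray v) m"
    using iff[OF ray_in_HH] by simp
  show "rel botS m \<Longrightarrow> v = 0"
    using iff[OF botS_in_HH] by (simp add: botS_def)
qed

end

context pqm3
begin

lemma represents_rayI:
  assumes v: "rel (ray v) m" and bot: "rel botS m \<Longrightarrow> v = 0"
  shows "represents m (ray v)"
proof -
  have "rel p m \<longleftrightarrow> ray v \<subseteq> p" if p: "p \<in> HH" for p
  proof (cases "rel botS m")
    case True
    have "0 \<in> p"
      using p by (simp add: mem_HH_iff vec.subspace_0)
    then show ?thesis
      using rel_if_rel_botS[OF True p] bot[OF True] by (simp add: botS_def)
  next
    case False
    show ?thesis
    proof
      assume "rel p m"
      then have "v \<in> p"
        by (rule mem_if_rel_ray[OF False v p])
      then show "ray v \<subseteq> p"
        using ray_subset_iff[OF p] by simp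
    next
      assume "ray v \<subseteq> p"
      then show "rel p m"
        by (rule rel_mono[OF ray_in_HH p _ v])
    qed
  qed
  then show ?thesis
    by (simp add: represents_def VV_eq_range_ray)
qed

lemma represents_uimg:
  assumes X: "represents m X" and U: "unitary U"
  shows "represents (u U m) (V_u U X)"
proof -
  obtain v where Xv: "X = ray v"
    using X by (auto simp: represents_def VV_eq_range_ray)
  have "rel (ray (U *v v)) (u U m)"
    using rel_uimg[OF ray_in_HH U represents_rayD(1)[OF X[unfolded Xv]]] by (simp add: uimg_ray)
  moreover have "U *v v = 0" if "rel botS (u U m)"
  proof -
    have "rel botS m"
      using rel_uinvimg[OF botS_in_HH U that] by (simp add: uinvimg_botS[OF U])
    then show ?thesis
      using represents_rayD(2)[OF X[unfolded Xv]] by simp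
  qed
  ultimately show ?thesis
    unfolding Xv V_u_def uimg_ray by (rule represents_rayI)
qed

lemma represents_prj:
  assumes X: "represents m X" and q: "q \<in> HH"
  shows "represents (prj q m) (V_pi q X)"
proof -
  obtain v where Xv: "X = ray v"
    using X by (auto simp: represents_def VV_eq_range_ray)
  obtain y z where y: "y \<in> q" and z: "z \<in> ortho q" and vyz: "v = y + z"
    using orthogonal_decomposition[OF q] by blast
  have VX: "V_pi q X = ray y"
    by (simp add: V_pi_def Xv vyz sasaki_ray[OF q y z])
  have "rel (ray y) (prj q m)"
    using rel_prj_sasaki[OF ray_in_HH q represents_rayD(1)[OF X[unfolded Xv]]]
    by (simp add: vyz sasaki_ray[OF q y z])
  moreover have "y = 0" if "rel botS (prj q m)"
  proof -
    have "rel (ortho q) m"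
      by (rule rel_ortho_if_prj_botS[OF q that])
    then have "ray v \<subseteq> ortho q"
      using X by (simp add: represents_def Xv)
    then have "v \<in> ortho q"
      by (simp add: ray_subset_iff)
    then have "hinner v y = 0" and "hinner z y = 0"
      using y z by (simp_all add: ortho_orthoD)
    then have "hinner y y = 0"
      by (simp add: vyz hinner_simps)
    then show "y = 0"
      by simp
  qed
  ultimately show ?thesis
    unfolding VX by (rule represents_rayI)
qed

lemma represents_eval:
  "wf_trm t \<Longrightarrow> represents m X \<Longrightarrow> represents (eval u prj t m) (eval V_u V_pi t X)"
  by (induction t) (simp_all add: represents_uimg represents_prj)

lemma sat_lits_iff_if_represents:
  assumes wf: "\<forall>l\<in>set phi. wf_lit l" and X: "represents m X"
  shows "sat_lits u prj rel phi m \<longleftrightarrow> sat_lits V_u V_pi V_rel phi X"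
proof -
  have "rel p (eval u prj t m) \<longleftrightarrow> V_rel p (eval V_u V_pi t X)" if "(b, t, p) \<in> set phi" for b t p
  proof -
    have "wf_trm t" "p \<in> HH"
      using wf that by (auto simp: wf_lit_def)
    then show ?thesis
      using represents_eval[OF _ X] by (simp add: represents_def V_rel_def)
  qed
  then show ?thesis
    unfolding sat_lits_def by fastforce
qed

lemma represents_prj_ray:
  assumes m: "represents m (ray a)" and ab: "hinner a b \<noteq> 0 \<or> b = 0"
  shows "represents (prj (ray b) m) (ray b)"
proof -
  have "V_pi (ray b) (ray a) = ray b"
  proof (cases "b = 0")
    case False
    then have "hinner a b / hinner b b \<noteq> 0"
      using ab by simp
    then show ?thesis
      by (simp add: V_pi_def sasaki_ray_ray ray_smult)
  qed (unfold V_pi_def sasaki_ray_ray, simp)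
  then show ?thesis
    using represents_prj[OF m ray_in_HH[of b]] by simp
qed

lemma ex_represents:
  assumes "X \<in> VV"
  shows "\<exists>m. represents m X"
proof -
  obtain v where X: "X = ray v"
    using assms by (auto simp: VV_eq_range_ray)
  obtain m e where e: "e \<noteq> 0" and m: "rel (ray e) m" "\<not> rel botS m"
    by (rule ex_rel_ray_not_botS)
  have me: "represents m (ray e)"
    using m by (intro represents_rayI) auto
  show ?thesis
  proof (cases "hinner e v \<noteq> 0 \<or> v = 0")
    case True
    then show ?thesis
      using represents_prj_ray[OF me] X by blast
  next
    case False
    define w where "w = e + v"
    have "hinner e w \<noteq> 0"
      using False e by (simp add: w_def hinner_simps)
    then have mw: "represents (prj (ray w) m) (ray w)"
      by (intro represents_prj_ray[OF me]) simp
    have "hinner w v \<noteq> 0"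
      using False by (simp add: w_def hinner_simps)
    then show ?thesis
      using represents_prj_ray[OF mw] X by blast
  qed
qed

end

theorem mainTheorem14:
  fixes u :: "'n::finite cmat \<Rightarrow> 'a \<Rightarrow> 'a"
    and prj :: "'n cvec set \<Rightarrow> 'a \<Rightarrow> 'a"
    and rel :: "'n cvec set \<Rightarrow> 'a \<Rightarrow> bool"
    and phi :: "'n lit list"
  assumes "CARD('n) \<ge> 3"
    and "PQM_model u prj rel"
    and "\<forall>l\<in>set phi. wf_lit l"
    and "\<exists>x\<in>VV. sat_lits V_u V_pi V_rel phi x"
  shows "\<exists>x. sat_lits u prj rel phi x"
proof -
  interpret pqm3 u prj rel
    using pqm_if_PQM_model[OF assms(2)] assms(1) by (simp add: pqm3_def pqm3_axioms_def)
  obtain X where "X \<in> VV" and sat: "sat_lits V_u V_pi V_rel phi X"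
    using assms(4) by blast
  then obtain m where "represents m X"
    using ex_represents by blast
  then have "sat_lits u prj rel phi m"
    using sat_lits_iff_if_represents[OF assms(3)] sat by blast
  then show ?thesis
    by blast
qed

end
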